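(* Consider the patient model in the context with actions from an $(r,k)$-exploratory policy over a trajectory of length $T$, and let $N_i:=\sum_{t=1}^T\mathbf 1_{\{u_t=e_i\}}$. Let $\mathcal E_N(r,T,k)$ be the event $\{N_i>\frac{r(T-k)}{2(M+1)}\text{ for all }i=1,\dots,M\}$. Then for $\delta\in(0,1)$, $\mathbf P(\mathcal E_N(r,T,k))\geq1-\delta$ whenever $T\geq k+\frac8r(M+1)\log(M/\delta)$.
   Context: Patient model: $M\geq1$ treatments; $\mathcal U:=\{v\in\{0,1\}^M:\|v\|_0\leq1\}$ (so $|\mathcal U|=M+1$), $e_i$ basis vectors. $x_{t+1}=ax_t+b^\top u_t+c^\top d_t+w_t$, adherence $d^i_t\mid x_t,u^i_t\sim\mathrm{Bernoulli}(u^i_t\sigma(x_t+\mu_i))$, $\sigma$ the sigmoid; $x_1$ distributed as the noise. Parameters $a\in[0,\bar a]$ (known $\bar a\in(0,1)$), $\|b\|_\infty\leq\bar b$, $\|c\|_\infty\leq\bar c$, $\mu\in[-\bar\mu,\bar\mu]^M$. $x_t,u_t,d_t$ fully observed. Noise i.i.d., zero-symmetric, $\sigma_s^2$-subgaussian, bounded by $\bar w>0$, log-concave density, known variance. With $\mathcal F_t:=\sigma(x_{0:t},u_{0:t},d_{0:t},w_{0:t})$, an $(r,k)$-exploratory policy ($r\in(0,1]$, $k\in\mathbb N$) is one that in every block $\{j+1,\dots,j+k\}$, $j\geq0$, almost surely takes at least $\lceil rk\rceil$ actions drawn uniformly from $\mathcal U$ independently of $\mathcal F_{t-1}$. *)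

theory Defs
  imports "HOL-Probability.Probability"
begin

definition sigmoid :: "real \<Rightarrow> real" where
  "sigmoid z = 1 / (1 + exp (- z))"

text \<open>Treatment vectors are functions nat => real supported on the indices 0..M-1
  (index i corresponds to treatment i+1 of the paper).  The action set U.\<close>
definition Uset :: "nat \<Rightarrow> (nat \<Rightarrow> real) set" where
  "Uset M = {v. (\<forall>i. v i \<in> {0, 1}) \<and> (\<forall>i. M \<le> i \<longrightarrow> v i = 0) \<and> card {i. v i \<noteq> 0} \<le> 1}"

definition basis_vec :: "nat \<Rightarrow> nat \<Rightarrow> real" where
  "basis_vec i = (\<lambda>j. if j = i then 1 else 0)"

definition log_concave :: "(real \<Rightarrow> real) \<Rightarrow> bool" where
  "log_concave f \<longleftrightarrow> (\<forall>x. 0 \<le> f x) \<and>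
     (\<forall>x y \<theta>. 0 \<le> \<theta> \<and> \<theta> \<le> 1 \<longrightarrow>
        f x powr \<theta> * f y powr (1 - \<theta>) \<le> f (\<theta> * x + (1 - \<theta>) * y))"

definition gen_sigma :: "'w measure \<Rightarrow> ('w \<Rightarrow> real) set \<Rightarrow> 'w measure" where
  "gen_sigma P Xs = sigma (space P) {X -` A \<inter> space P | X A. X \<in> Xs \<and> A \<in> sets borel}"

definition patient_filtration ::
  "'w measure \<Rightarrow> nat \<Rightarrow> (nat \<Rightarrow> 'w \<Rightarrow> real) \<Rightarrow> (nat \<Rightarrow> 'w \<Rightarrow> nat \<Rightarrow> real)
    \<Rightarrow> (nat \<Rightarrow> 'w \<Rightarrow> nat \<Rightarrow> real) \<Rightarrow> (nat \<Rightarrow> 'w \<Rightarrow> real) \<Rightarrow> nat \<Rightarrow> 'w measure" where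
  "patient_filtration P M x u d w t =
     gen_sigma P (\<Union>s\<in>{..t}. {x s, w s} \<union> {(\<lambda>\<omega>. u s \<omega> i) | i. i < M}
                                      \<union> {(\<lambda>\<omega>. d s \<omega> i) | i. i < M})"

text \<open>(r,k)-exploratory policy: there is an F_{t-1}-predictable exploration indicator chi
  and draws zeta_t, uniform on U and independent of F_{t-1}, such that the action equals
  the draw whenever chi_t holds, and every block {j+1..j+k} a.s. contains at least
  ceil(r k) exploratory times.\<close>
definition exploratory ::
  "'w measure \<Rightarrow> nat \<Rightarrow> (nat \<Rightarrow> 'w measure) \<Rightarrow> (nat \<Rightarrow> 'w \<Rightarrow> nat \<Rightarrow> real) \<Rightarrow> real \<Rightarrow> nat \<Rightarrow> bool" where
  "exploratory P M F u r k \<longleftrightarrow>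
    (\<exists>explore draw.
       (\<forall>t\<ge>1. {\<omega> \<in> space P. explore t \<omega>} \<in> sets (F (t - 1))) \<and>
       (\<forall>t\<ge>1. (AE \<omega> in P. draw t \<omega> \<in> Uset M) \<and>
          (\<forall>v\<in>Uset M. {\<omega> \<in> space P. draw t \<omega> = v} \<in> sets P \<and>
             (\<forall>A\<in>sets (F (t - 1)).
                measure P ({\<omega> \<in> space P. draw t \<omega> = v} \<inter> A) = measure P A / real (M + 1)))) \<and>
       (\<forall>t\<ge>1. AE \<omega> in P. explore t \<omega> \<longrightarrow> u t \<omega> = draw t \<omega>) \<and>
       (\<forall>j. AE \<omega> in P. nat \<lceil>r * real k\<rceil> \<le> card {t \<in> {j+1..j+k}. explore t \<omega>}))"

definition count_treat :: "(nat \<Rightarrow> 'w \<Rightarrow> nat \<Rightarrow> real) \<Rightarrow> nat \<Rightarrow> nat \<Rightarrow> 'w \<Rightarrow> nat" where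
  "count_treat u T i \<omega> = card {t \<in> {1..T}. u t \<omega> = basis_vec i}"

end

theory Submission
  imports Defs
begin

text \<open>Fix a treatment i and put p = 1/(M+1). At an exploratory time the action is e_i with
  conditional probability p given the past. Hence, if N counts the exploratory times and S those
  among them with action e_i, the process exp ((p/2) N - (ln 2) S) is a supermartingale: one step
  multiplies its conditional expectation by at most exp (p/2) (1 - p/2) <= 1. The block condition gives
  N >= n0 = r (T - k) almost surely, and on the event S <= p n0 / 2 the process is at least
  exp (p n0 / 8) because ln 2 <= 3/4. Markov's inequality bounds this event by
  exp (- p n0 / 8) <= \<delta> / M, and a union bound over the M treatments concludes.\<close>

section \<open>Generated sigma algebras and the patient filtration\<close>

lemma sets_gen_sigma:
  "sets (gen_sigma P Xs) = sigma_sets (space P) {X -` A \<inter> space P | X A. X \<in> Xs \<and> A \<in> sets borel}"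
  unfolding gen_sigma_def by (rule sets_measure_of) auto

lemma space_gen_sigma [simp]: "space (gen_sigma P Xs) = space P"
  unfolding gen_sigma_def by (rule space_measure_of_conv)

lemma subalgebra_gen_sigma:
  assumes "Xs \<subseteq> borel_measurable P"
  shows "subalgebra P (gen_sigma P Xs)"
proof -
  have "{X -` A \<inter> space P | X A. X \<in> Xs \<and> A \<in> sets borel} \<subseteq> sets P"
    using assms by (auto simp: measurable_sets)
  then show ?thesis
    unfolding subalgebra_def sets_gen_sigma by (simp add: sets.sigma_sets_subset)
qed

lemma gen_sigma_mono: "Xs \<subseteq> Ys \<Longrightarrow> sets (gen_sigma P Xs) \<subseteq> sets (gen_sigma P Ys)"
  unfolding sets_gen_sigma by (rule sigma_sets_subseteq) blast

lemma measurable_gen_sigma: "X \<in> Xs \<Longrightarrow> X \<in> borel_measurable (gen_sigma P Xs)"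
  by (rule measurableI) (auto simp: sets_gen_sigma)

lemma space_patient_filtration [simp]: "space (patient_filtration P M x u d w t) = space P"
  by (simp add: patient_filtration_def)

lemma subalgebra_patient_filtration:
  assumes "\<And>t. x t \<in> borel_measurable P" "\<And>t. w t \<in> borel_measurable P"
    "\<And>t i. (\<lambda>\<omega>. u t \<omega> i) \<in> borel_measurable P" "\<And>t i. (\<lambda>\<omega>. d t \<omega> i) \<in> borel_measurable P"
  shows "subalgebra P (patient_filtration P M x u d w t)"
  unfolding patient_filtration_def using assms by (intro subalgebra_gen_sigma) auto

lemma patient_filtration_mono:
  "s \<le> t \<Longrightarrow> sets (patient_filtration P M x u d w s) \<subseteq> sets (patient_filtration P M x u d w t)"
  unfolding patient_filtration_def by (intro gen_sigma_mono UN_mono) auto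

lemma basis_vec_in_Uset: "i < M \<Longrightarrow> basis_vec i \<in> Uset M"
  by (auto simp: Uset_def basis_vec_def card_le_Suc0_iff_eq)

lemma Uset_eqI: "f \<in> Uset M \<Longrightarrow> g \<in> Uset M \<Longrightarrow> (\<And>j. j < M \<Longrightarrow> f j = g j) \<Longrightarrow> f = g"
proof (rule ext)
  fix j
  assume "f \<in> Uset M" "g \<in> Uset M" "\<And>j. j < M \<Longrightarrow> f j = g j"
  then show "f j = g j"
    unfolding Uset_def by (cases "j < M") auto
qed

lemma action_event_in_patient_filtration:
  assumes "\<forall>\<omega>\<in>space P. u t \<omega> \<in> Uset M" "v \<in> Uset M"
  shows "{\<omega> \<in> space P. u t \<omega> = v} \<in> sets (patient_filtration P M x u d w t)"
proof -
  have "u t \<omega> = v \<longleftrightarrow> (\<forall>j\<in>{..<M}. u t \<omega> j = v j)" if "\<omega> \<in> space P" for \<omega>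
    using assms that Uset_eqI[of "u t \<omega>" M v] by auto
  then have "{\<omega> \<in> space P. u t \<omega> = v} = {\<omega> \<in> space P. \<forall>j\<in>{..<M}. u t \<omega> j = v j}"
    by blast
  also have "\<dots> \<in> sets (patient_filtration P M x u d w t)"
  proof -
    have "{\<omega> \<in> space P. u t \<omega> j = v j} \<in> sets (patient_filtration P M x u d w t)" if "j < M" for j
    proof -
      have "(\<lambda>\<omega>. u t \<omega> j) \<in> borel_measurable (patient_filtration P M x u d w t)"
        unfolding patient_filtration_def using that by (intro measurable_gen_sigma) blast
      from measurable_sets[OF this, of "{v j}"] show ?thesis
        by (simp add: vimage_def Int_def conj_commute)
    qed
    then show ?thesis
      using sets.sets_Collect_finite_All[of "{..<M}" "patient_filtration P M x u d w t"] by simp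
  qed
  finally show ?thesis .
qed

section \<open>An exponential supermartingale for thinned Bernoulli trials\<close>

lemma real_card_filter_eq_sum_indicator:
  "finite A \<Longrightarrow> real (card {s \<in> A. \<omega> \<in> E s}) = (\<Sum>s\<in>A. indicator (E s) \<omega>)"
  by (simp add: indicator_def sum.If_cases Int_def)

lemma borel_measurable_card_filter:
  assumes "finite A" "\<And>s. s \<in> A \<Longrightarrow> E s \<in> sets N"
  shows "(\<lambda>\<omega>. real (card {s \<in> A. \<omega> \<in> E s})) \<in> borel_measurable N"
  unfolding real_card_filter_eq_sum_indicator[OF assms(1)] using assms(2) by measurable

text \<open>This is exp ((p/2) 1_E - (ln 2) 1_(E \<inter> U)) by chernoff_weight_eq_exp, written affinely in
  the indicators so that its conditional expectation is affine in the conditional probability of U.\<close>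
definition chernoff_weight :: "real \<Rightarrow> 'a set \<Rightarrow> 'a set \<Rightarrow> 'a \<Rightarrow> real" where
  "chernoff_weight p E U \<omega> = 1 + (exp (p / 2) - 1) * indicator E \<omega> - exp (p / 2) / 2 * indicator (E \<inter> U) \<omega>"

lemma chernoff_weight_eq_exp:
  "chernoff_weight p E U \<omega> = exp (p / 2 * indicator E \<omega> - ln 2 * indicator (E \<inter> U) \<omega>)"
  by (simp add: chernoff_weight_def indicator_def exp_diff)

lemma prod_chernoff_weight:
  assumes "finite A"
  shows "(\<Prod>s\<in>A. chernoff_weight p (E s) (U s) \<omega>)
    = exp (p / 2 * card {s \<in> A. \<omega> \<in> E s} - ln 2 * card {s \<in> A. \<omega> \<in> E s \<inter> U s})"
  using assms by (simp add: chernoff_weight_eq_exp exp_sum[symmetric] sum_subtractf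
      sum_distrib_left real_card_filter_eq_sum_indicator)

lemma chernoff_weight_pos: "0 < chernoff_weight p E U \<omega>"
  by (simp add: chernoff_weight_eq_exp)

lemma chernoff_weight_le: "0 \<le> p \<Longrightarrow> chernoff_weight p E U \<omega> \<le> exp (p / 2)"
  by (simp add: chernoff_weight_eq_exp indicator_def)

lemma prod_chernoff_weight_le:
  "0 \<le> p \<Longrightarrow> (\<Prod>s\<in>A. chernoff_weight p (E s) (U s) \<omega>) \<le> exp (p / 2) ^ card A"
  using prod_mono[of A "\<lambda>s. chernoff_weight p (E s) (U s) \<omega>" "\<lambda>_. exp (p / 2)"]
  by (simp add: chernoff_weight_le chernoff_weight_pos less_imp_le)

lemma borel_measurable_prod_chernoff_weight:
  assumes "\<And>s. s \<in> A \<Longrightarrow> E s \<in> sets N" "\<And>s. s \<in> A \<Longrightarrow> U s \<in> sets N"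
  shows "(\<lambda>\<omega>. \<Prod>s\<in>A. chernoff_weight p (E s) (U s) \<omega>) \<in> borel_measurable N"
proof (rule borel_measurable_prod)
  fix s assume "s \<in> A"
  with assms have [measurable]: "E s \<in> sets N" "U s \<in> sets N" by auto
  show "chernoff_weight p (E s) (U s) \<in> borel_measurable N"
    unfolding chernoff_weight_def[abs_def] by measurable
qed

context prob_space
begin

lemma integral_mult_indicator_cond_prob:
  assumes sub: "subalgebra M F" and E: "E \<in> sets F" and U: "U \<in> sets M"
    and cond: "\<And>A. A \<in> sets F \<Longrightarrow> prob (E \<inter> U \<inter> A) = p * prob (E \<inter> A)"
    and Z: "Z \<in> borel_measurable F" and Z_bounded: "\<And>\<omega>. \<bar>Z \<omega>\<bar> \<le> B"
  shows "(\<integral>\<omega>. Z \<omega> * indicator (E \<inter> U) \<omega> \<partial>M) = p * (\<integral>\<omega>. Z \<omega> * indicator E \<omega> \<partial>M)"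
proof -
  interpret finite_measure_subalgebra M F
    by unfold_locales (rule sub)
  have EM: "E \<in> sets M" using sub E unfolding subalgebra_def by blast
  have ZM: "Z \<in> borel_measurable M" by (rule measurable_from_subalg[OF sub Z])
  have cond_exp: "AE \<omega> in M. real_cond_exp M F (indicator (E \<inter> U)) \<omega> = p * indicator E \<omega>"
  proof (rule real_cond_exp_charact)
    fix A assume A: "A \<in> sets F"
    then have AM: "A \<in> sets M" using sub unfolding subalgebra_def by blast
    have "(\<integral>\<omega>\<in>A. indicator (E \<inter> U) \<omega> \<partial>M) = prob (E \<inter> U \<inter> A)"
      using AM EM U by (simp add: set_lebesgue_integral_def indicator_inter_arith[symmetric] Int_ac)
    also have "\<dots> = p * prob (E \<inter> A)" using cond A by blast
    also have "\<dots> = (\<integral>\<omega>\<in>A. p * indicator E \<omega> \<partial>M)"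
      using AM EM by (simp add: set_lebesgue_integral_def indicator_inter_arith[symmetric] Int_ac
          mult.left_commute)
    finally show "(\<integral>\<omega>\<in>A. indicator (E \<inter> U) \<omega> \<partial>M) = (\<integral>\<omega>\<in>A. p * indicator E \<omega> \<partial>M)" .
  qed (use EM U E in \<open>auto intro: integrable_const_bound[where B=1] integrable_const_bound[where B="\<bar>p\<bar>"]
      simp: indicator_def\<close>)
  have "integrable M (\<lambda>\<omega>. Z \<omega> * indicator (E \<inter> U) \<omega>)"
    using ZM EM U Z_bounded order_trans[OF abs_ge_zero Z_bounded]
    by (intro integrable_const_bound[where B=B]) (auto simp: indicator_def abs_mult)
  then have "(\<integral>\<omega>. Z \<omega> * indicator (E \<inter> U) \<omega> \<partial>M)
      = (\<integral>\<omega>. Z \<omega> * real_cond_exp M F (indicator (E \<inter> U)) \<omega> \<partial>M)"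
    using real_cond_exp_intg(2)[OF _ Z] EM U by simp
  also have "\<dots> = (\<integral>\<omega>. Z \<omega> * (p * indicator E \<omega>) \<partial>M)"
    by (rule integral_cong_AE) (use cond_exp ZM EM in auto)
  finally show ?thesis
    by (simp add: mult.left_commute)
qed

lemma integral_mult_chernoff_weight_le:
  assumes sub: "subalgebra M F" and E: "E \<in> sets F" and U: "U \<in> sets M"
    and cond: "\<And>A. A \<in> sets F \<Longrightarrow> prob (E \<inter> U \<inter> A) = p * prob (E \<inter> A)"
    and p: "0 \<le> p"
    and Z: "Z \<in> borel_measurable F" and Z_nonneg: "\<And>\<omega>. 0 \<le> Z \<omega>" and Z_le: "\<And>\<omega>. Z \<omega> \<le> B"
  shows "(\<integral>\<omega>. Z \<omega> * chernoff_weight p E U \<omega> \<partial>M) \<le> expectation Z"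
proof -
  define q where "q = exp (p / 2)"
  have EM: "E \<in> sets M" using sub E unfolding subalgebra_def by blast
  have ZM: "Z \<in> borel_measurable M" by (rule measurable_from_subalg[OF sub Z])
  have Z_abs_le: "\<bar>Z \<omega>\<bar> \<le> B" for \<omega> using Z_nonneg Z_le by simp
  have integrable: "integrable M Z" "integrable M (\<lambda>\<omega>. Z \<omega> * indicator E \<omega>)"
    "integrable M (\<lambda>\<omega>. Z \<omega> * indicator (E \<inter> U) \<omega>)"
    using ZM EM U Z_abs_le order_trans[OF abs_ge_zero Z_abs_le]
    by (auto intro!: integrable_const_bound[where B=B] simp: indicator_def)
  have "q * (1 - p / 2) \<le> q * exp (- (p / 2))"
    using exp_ge_add_one_self[of "- (p / 2)"] by (simp add: q_def)
  then have q_le: "q * (1 - p / 2) \<le> 1"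
    by (simp add: q_def exp_minus)
  have "Z \<omega> * chernoff_weight p E U \<omega>
      = Z \<omega> + (q - 1) * (Z \<omega> * indicator E \<omega>) - q / 2 * (Z \<omega> * indicator (E \<inter> U) \<omega>)" for \<omega>
    by (simp add: chernoff_weight_def q_def algebra_simps)
  then have "(\<integral>\<omega>. Z \<omega> * chernoff_weight p E U \<omega> \<partial>M) = expectation Z
      + (q - 1) * (\<integral>\<omega>. Z \<omega> * indicator E \<omega> \<partial>M) - q / 2 * (\<integral>\<omega>. Z \<omega> * indicator (E \<inter> U) \<omega> \<partial>M)"
    using integrable by simp
  also have "\<dots> = expectation Z + (q * (1 - p / 2) - 1) * (\<integral>\<omega>. Z \<omega> * indicator E \<omega> \<partial>M)"
    using integral_mult_indicator_cond_prob[OF sub E U cond Z Z_abs_le] by (simp add: algebra_simps)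
  also have "\<dots> \<le> expectation Z"
    using q_le Z_nonneg by (simp add: mult_nonpos_nonneg)
  finally show ?thesis .
qed

context
  fixes F :: "nat \<Rightarrow> 'a measure" and E U :: "nat \<Rightarrow> 'a set" and p :: real
  assumes sub: "\<And>t. subalgebra M (F t)"
    and mono: "\<And>s t. s \<le> t \<Longrightarrow> sets (F s) \<subseteq> sets (F t)"
    and E: "\<And>t. 1 \<le> t \<Longrightarrow> E t \<in> sets (F (t - 1))" and U: "\<And>t. 1 \<le> t \<Longrightarrow> U t \<in> sets (F t)"
    and cond: "\<And>t A. 1 \<le> t \<Longrightarrow> A \<in> sets (F (t - 1)) \<Longrightarrow> prob (E t \<inter> U t \<inter> A) = p * prob (E t \<inter> A)"
    and p: "0 \<le> p"
begin

lemma borel_measurable_prod_chernoff_weight_filtration: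
  "(\<lambda>\<omega>. \<Prod>s\<in>{1..T}. chernoff_weight p (E s) (U s) \<omega>) \<in> borel_measurable (F T)"
proof (rule borel_measurable_prod_chernoff_weight)
  fix s assume "s \<in> {1..T}"
  then show "E s \<in> sets (F T)" "U s \<in> sets (F T)"
    using E[of s] U[of s] mono[of "s - 1" T] mono[of s T] by (auto simp: subset_iff)
qed

lemma expectation_prod_chernoff_weight_le_1:
  "expectation (\<lambda>\<omega>. \<Prod>s\<in>{1..T}. chernoff_weight p (E s) (U s) \<omega>) \<le> 1"
proof (induction T)
  case 0
  then show ?case by (simp add: prob_space)
next
  case (Suc T)
  define Z where "Z = (\<lambda>\<omega>. \<Prod>s\<in>{1..T}. chernoff_weight p (E s) (U s) \<omega>)"
  have "0 \<le> Z \<omega>" for \<omega>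
    by (simp add: Z_def prod_chernoff_weight)
  moreover have "Z \<omega> \<le> exp (p / 2) ^ T" for \<omega>
    using prod_chernoff_weight_le[OF p, where A = "{1..T}" and E = E and U = U] by (simp add: Z_def)
  moreover have "U (Suc T) \<in> sets M"
    using U[of "Suc T"] sub[of "Suc T"] by (auto simp: subalgebra_def)
  ultimately have step: "(\<integral>\<omega>. Z \<omega> * chernoff_weight p (E (Suc T)) (U (Suc T)) \<omega> \<partial>M) \<le> expectation Z"
    using E[of "Suc T"] cond[of "Suc T"] sub[of T] p borel_measurable_prod_chernoff_weight_filtration[of T]
    by (intro integral_mult_chernoff_weight_le) (auto simp: Z_def)
  have "(\<lambda>\<omega>. \<Prod>s\<in>{1..Suc T}. chernoff_weight p (E s) (U s) \<omega>)
      = (\<lambda>\<omega>. Z \<omega> * chernoff_weight p (E (Suc T)) (U (Suc T)) \<omega>)"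
    by (simp add: Z_def prod.nat_ivl_Suc' mult.commute)
  then show ?case
    using step Suc.IH by (simp only: Z_def)
qed

lemma prob_few_successes_le:
  fixes n0 :: real
  assumes n0: "0 \<le> n0" and many_trials: "AE \<omega> in M. n0 \<le> card {s \<in> {1..T}. \<omega> \<in> E s}"
  shows "prob {\<omega> \<in> space M. card {s \<in> {1..T}. \<omega> \<in> E s \<inter> U s} \<le> p * n0 / 2} \<le> exp (- (p * n0 / 8))"
proof -
  define Z where "Z = (\<lambda>\<omega>. \<Prod>s\<in>{1..T}. chernoff_weight p (E s) (U s) \<omega>)"
  have [measurable]: "Z \<in> borel_measurable M"
    unfolding Z_def by (rule measurable_from_subalg[OF sub borel_measurable_prod_chernoff_weight_filtration])
  have Z_nonneg: "0 \<le> Z \<omega>" for \<omega>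
    by (simp add: Z_def prod_chernoff_weight)
  moreover have "Z \<omega> \<le> exp (p / 2) ^ T" for \<omega>
    using prod_chernoff_weight_le[OF p, where A = "{1..T}" and E = E and U = U] by (simp add: Z_def)
  ultimately have "integrable M Z"
    by (intro integrable_const_bound[where B="exp (p / 2) ^ T"]) auto
  have Z_large: "exp (p * n0 / 8) \<le> Z \<omega>"
    if "n0 \<le> card {s \<in> {1..T}. \<omega> \<in> E s}" "card {s \<in> {1..T}. \<omega> \<in> E s \<inter> U s} \<le> p * n0 / 2" for \<omega>
  proof -
    have "p / 2 * n0 \<le> p / 2 * card {s \<in> {1..T}. \<omega> \<in> E s}"
      using that(1) p by (intro mult_left_mono) auto
    moreover have "ln 2 * card {s \<in> {1..T}. \<omega> \<in> E s \<inter> U s} \<le> 3 / 4 * (p * n0 / 2)"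
      using that(2) ln2_le_25_over_36 by (intro mult_mono) auto
    ultimately have "p * n0 / 8 \<le> p / 2 * card {s \<in> {1..T}. \<omega> \<in> E s} - ln 2 * card {s \<in> {1..T}. \<omega> \<in> E s \<inter> U s}"
      by linarith
    then show ?thesis
      by (simp add: Z_def prod_chernoff_weight)
  qed
  have "prob {\<omega> \<in> space M. card {s \<in> {1..T}. \<omega> \<in> E s \<inter> U s} \<le> p * n0 / 2}
      \<le> prob {\<omega> \<in> space M. exp (p * n0 / 8) \<le> Z \<omega>}"
    using many_trials by (intro finite_measure_mono_AE) (auto elim!: eventually_mono intro: Z_large)
  also have "\<dots> \<le> expectation Z / exp (p * n0 / 8)"
    using \<open>integrable M Z\<close> Z_nonneg by (intro integral_Markov_inequality_measure[where A="space M"]) auto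
  also have "\<dots> \<le> exp (- (p * n0 / 8))"
    using expectation_prod_chernoff_weight_le_1[of T]
    by (simp add: Z_def exp_minus divide_right_mono inverse_eq_divide)
  finally show ?thesis .
qed

end

end

section \<open>Exploratory policies\<close>

lemma card_filter_blocks_ge:
  assumes "\<And>j. c \<le> card {s \<in> {j+1..j+k}. Q s}"
  shows "m * c \<le> card {s \<in> {1..m * k}. Q s}"
proof (induction m)
  case 0
  then show ?case by simp
next
  case (Suc m)
  have "{s \<in> {1..Suc m * k}. Q s} = {s \<in> {1..m * k}. Q s} \<union> {s \<in> {m * k + 1..m * k + k}. Q s}"
    by auto
  then have "card {s \<in> {1..Suc m * k}. Q s} = card {s \<in> {1..m * k}. Q s} + card {s \<in> {m * k + 1..m * k + k}. Q s}"
    by (simp add: card_Un_disjoint disjoint_iff)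
  then show ?case
    using Suc.IH assms[of "m * k"] by simp
qed

lemma real_card_filter_ge_of_blocks:
  assumes blocks: "\<And>j. nat \<lceil>r * real k\<rceil> \<le> card {s \<in> {j+1..j+k}. Q s}" and r: "0 \<le> r" and k: "1 \<le> k"
  shows "r * (real T - real k) \<le> card {s \<in> {1..T}. Q s}"
proof -
  define m where "m = T div k"
  have "T < m * k + k"
    using mod_less_divisor[of k T] div_mult_mod_eq[of T k] k unfolding m_def by linarith
  then have "real T - real k \<le> real m * real k"
    by (metis of_nat_add of_nat_less_iff of_nat_mult less_imp_le diff_le_eq)
  then have "r * (real T - real k) \<le> real m * (r * real k)"
    using mult_left_mono[OF _ r] by (simp add: mult.left_commute)
  also have "\<dots> \<le> real m * real (nat \<lceil>r * real k\<rceil>)"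
    by (intro mult_left_mono) linarith+
  also have "\<dots> \<le> card {s \<in> {1..m * k}. Q s}"
    using card_filter_blocks_ge[OF blocks, of m] by (simp flip: of_nat_mult)
  also have "\<dots> \<le> card {s \<in> {1..T}. Q s}"
    using div_times_less_eq_dividend[of T k, folded m_def] by (intro of_nat_mono card_mono) auto
  finally show ?thesis .
qed

lemma exploratoryE:
  assumes "exploratory P M F u r k" and sub: "\<And>t. subalgebra P (F t)"
    and action_events: "\<And>t v. v \<in> Uset M \<Longrightarrow> {\<omega> \<in> space P. u t \<omega> = v} \<in> sets P"
  obtains explore where
    "\<And>t. 1 \<le> t \<Longrightarrow> {\<omega> \<in> space P. explore t \<omega>} \<in> sets (F (t - 1))"
    "\<And>v t A. v \<in> Uset M \<Longrightarrow> 1 \<le> t \<Longrightarrow> A \<in> sets (F (t - 1)) \<Longrightarrow>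
       measure P ({\<omega> \<in> space P. explore t \<omega>} \<inter> {\<omega> \<in> space P. u t \<omega> = v} \<inter> A)
       = measure P ({\<omega> \<in> space P. explore t \<omega>} \<inter> A) / real (M + 1)"
    "\<And>j. AE \<omega> in P. nat \<lceil>r * real k\<rceil> \<le> card {t \<in> {j+1..j+k}. explore t \<omega>}"
proof -
  obtain explore draw where
    explore_events: "\<forall>t\<ge>1. {\<omega> \<in> space P. explore t \<omega>} \<in> sets (F (t - 1))" and
    draw_uniform: "\<forall>t\<ge>1. (AE \<omega> in P. draw t \<omega> \<in> Uset M) \<and>
          (\<forall>v\<in>Uset M. {\<omega> \<in> space P. draw t \<omega> = v} \<in> sets P \<and>
             (\<forall>A\<in>sets (F (t - 1)).
                measure P ({\<omega> \<in> space P. draw t \<omega> = v} \<inter> A) = measure P A / real (M + 1)))" and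
    explore_draw: "\<forall>t\<ge>1. AE \<omega> in P. explore t \<omega> \<longrightarrow> u t \<omega> = draw t \<omega>" and
    blocks: "\<forall>j. AE \<omega> in P. nat \<lceil>r * real k\<rceil> \<le> card {t \<in> {j+1..j+k}. explore t \<omega>}"
    using assms(1) unfolding exploratory_def by blast
  have "measure P ({\<omega> \<in> space P. explore t \<omega>} \<inter> {\<omega> \<in> space P. u t \<omega> = v} \<inter> A)
       = measure P ({\<omega> \<in> space P. explore t \<omega>} \<inter> A) / real (M + 1)"
    if v: "v \<in> Uset M" and t: "1 \<le> t" and A: "A \<in> sets (F (t - 1))" for v t A
  proof -
    let ?E = "{\<omega> \<in> space P. explore t \<omega>}"
    have E_A: "?E \<inter> A \<in> sets (F (t - 1))"
      using explore_events t A by auto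
    have "?E \<in> sets P" "A \<in> sets P"
      using explore_events t A sub[of "t - 1"] by (auto simp: subalgebra_def)
    moreover have "{\<omega> \<in> space P. draw t \<omega> = v} \<in> sets P"
      using draw_uniform t v by blast
    ultimately have "measure P (?E \<inter> {\<omega> \<in> space P. u t \<omega> = v} \<inter> A)
        = measure P ({\<omega> \<in> space P. draw t \<omega> = v} \<inter> (?E \<inter> A))"
      using explore_draw t action_events[OF v]
      by (intro measure_eq_AE) (auto elim!: eventually_mono)
    also have "\<dots> = measure P (?E \<inter> A) / real (M + 1)"
      using draw_uniform t v E_A by blast
    finally show ?thesis .
  qed
  with that explore_events blocks show ?thesis
    by blast
qed

lemma prob_exploratory_action_rare_le:
  fixes F :: "nat \<Rightarrow> 'w measure"
  assumes prob: "prob_space P" and policy: "exploratory P M F u r k"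
    and sub: "\<And>t. subalgebra P (F t)" and mono: "\<And>s t. s \<le> t \<Longrightarrow> sets (F s) \<subseteq> sets (F t)"
    and action_events: "\<And>t v. v \<in> Uset M \<Longrightarrow> {\<omega> \<in> space P. u t \<omega> = v} \<in> sets (F t)"
    and v: "v \<in> Uset M" and r: "0 \<le> r" and k: "1 \<le> k" "k \<le> T"
  shows "measure P {\<omega> \<in> space P. card {t \<in> {1..T}. u t \<omega> = v} \<le> r * (real T - real k) / (2 * real (M + 1))}
    \<le> exp (- (r * (real T - real k) / (8 * real (M + 1))))"
proof -
  interpret prob_space P by (rule prob)
  have action_events_P: "{\<omega> \<in> space P. u t \<omega> = v} \<in> events" if "v \<in> Uset M" for t v
    using action_events[OF that] sub[of t] by (auto simp: subalgebra_def)
  obtain explore where explore_events: "\<And>t. 1 \<le> t \<Longrightarrow> {\<omega> \<in> space P. explore t \<omega>} \<in> sets (F (t - 1))"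
    and uniform: "\<And>v t A. v \<in> Uset M \<Longrightarrow> 1 \<le> t \<Longrightarrow> A \<in> sets (F (t - 1)) \<Longrightarrow>
       prob ({\<omega> \<in> space P. explore t \<omega>} \<inter> {\<omega> \<in> space P. u t \<omega> = v} \<inter> A)
       = prob ({\<omega> \<in> space P. explore t \<omega>} \<inter> A) / real (M + 1)"
    and blocks: "\<And>j. AE \<omega> in P. nat \<lceil>r * real k\<rceil> \<le> card {t \<in> {j+1..j+k}. explore t \<omega>}"
    using exploratoryE[OF policy sub action_events_P] by blast
  define E where "E t = {\<omega> \<in> space P. explore t \<omega>}" for t
  define U where "U t = {\<omega> \<in> space P. u t \<omega> = v}" for t
  define p where "p = 1 / real (M + 1)"
  define n0 where "n0 = r * (real T - real k)"
  have "AE \<omega> in P. \<forall>j. nat \<lceil>r * real k\<rceil> \<le> card {t \<in> {j+1..j+k}. explore t \<omega>}"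
    using blocks by (simp add: AE_all_countable)
  then have "AE \<omega> in P. \<forall>j. nat \<lceil>r * real k\<rceil> \<le> card {t \<in> {j+1..j+k}. \<omega> \<in> E t}"
    using AE_space by eventually_elim (simp add: E_def)
  then have many_explorations: "AE \<omega> in P. n0 \<le> card {t \<in> {1..T}. \<omega> \<in> E t}"
    unfolding n0_def by (rule eventually_mono) (rule real_card_filter_ge_of_blocks[OF _ r k(1)], blast)
  have "E s \<in> events" "U s \<in> events" if "s \<in> {1..T}" for s
    using explore_events[of s] sub[of "s - 1"] action_events_P[OF v] that
    by (auto simp: E_def U_def subalgebra_def)
  then have [measurable]: "(\<lambda>\<omega>. real (card {s \<in> {1..T}. \<omega> \<in> E s \<inter> U s})) \<in> borel_measurable P"
    by (auto intro: borel_measurable_card_filter)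
  have fewer: "real (card {s \<in> {1..T}. \<omega> \<in> E s \<inter> U s}) \<le> card {t \<in> {1..T}. u t \<omega> = v}" for \<omega>
    unfolding E_def U_def by (intro of_nat_mono card_mono) auto
  have "{\<omega> \<in> space P. card {s \<in> {1..T}. \<omega> \<in> E s \<inter> U s} \<le> p * n0 / 2} \<in> events"
    by measurable
  then have "prob {\<omega> \<in> space P. card {t \<in> {1..T}. u t \<omega> = v} \<le> p * n0 / 2}
      \<le> prob {\<omega> \<in> space P. card {s \<in> {1..T}. \<omega> \<in> E s \<inter> U s} \<le> p * n0 / 2}"
    by (rule finite_measure_mono[rotated]) (blast intro: order_trans[OF fewer])
  also have "\<dots> \<le> exp (- (p * n0 / 8))"
  proof (rule prob_few_successes_le[where F = F and E = E and U = U, OF sub mono])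
    show "prob (E t \<inter> U t \<inter> A) = p * prob (E t \<inter> A)" if "1 \<le> t" "A \<in> sets (F (t - 1))" for t A
      using uniform[OF v that] by (simp add: E_def U_def p_def)
    show "0 \<le> n0"
      using r k(2) by (simp add: n0_def)
  qed (use explore_events action_events[OF v] many_explorations in \<open>auto simp: E_def U_def p_def\<close>)
  finally show ?thesis
    by (simp add: p_def n0_def ac_simps)
qed

lemma borel_measurable_count_treat:
  assumes "\<And>t. {\<omega> \<in> space P. u t \<omega> = basis_vec i} \<in> sets P"
  shows "(\<lambda>\<omega>. real (count_treat u T i \<omega>)) \<in> borel_measurable P"
proof -
  have "(\<lambda>\<omega>. real (card {t \<in> {1..T}. \<omega> \<in> {\<omega> \<in> space P. u t \<omega> = basis_vec i}})) \<in> borel_measurable P"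
    using assms by (intro borel_measurable_card_filter) auto
  then show ?thesis
    by (rule measurable_cong[THEN iffD1, rotated]) (simp add: count_treat_def)
qed

lemma (in prob_space) prob_all_lessThan_ge:
  fixes n :: nat and \<epsilon> :: real
  assumes "\<And>i. i < n \<Longrightarrow> {\<omega> \<in> space M. Q i \<omega>} \<in> events"
    and "\<And>i. i < n \<Longrightarrow> prob {\<omega> \<in> space M. \<not> Q i \<omega>} \<le> \<epsilon>"
  shows "1 - real n * \<epsilon> \<le> prob {\<omega> \<in> space M. \<forall>i<n. Q i \<omega>}"
proof -
  have "prob (\<Union>i<n. {\<omega> \<in> space M. \<not> Q i \<omega>}) \<le> (\<Sum>i<n. prob {\<omega> \<in> space M. \<not> Q i \<omega>})"
    by (rule finite_measure_subadditive_finite) (use assms(1) in auto)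
  also have "\<dots> \<le> n * \<epsilon>"
    using sum_mono[of "{..<n}", OF assms(2)] by simp
  finally have "prob (\<Union>i<n. {\<omega> \<in> space M. \<not> Q i \<omega>}) \<le> n * \<epsilon>" .
  moreover have "{\<omega> \<in> space M. \<forall>i<n. Q i \<omega>} = space M - (\<Union>i<n. {\<omega> \<in> space M. \<not> Q i \<omega>})"
    by auto
  ultimately show ?thesis
    using assms(1) by (simp add: prob_compl sets.countable_UN)
qed

theorem mainTheorem14:
  fixes P :: "'w measure" and M k T :: nat and r \<delta> :: real
    and x w :: "nat \<Rightarrow> 'w \<Rightarrow> real" and u d :: "nat \<Rightarrow> 'w \<Rightarrow> nat \<Rightarrow> real"
    and a abar bbar cbar mubar wbar sigma_s :: real and b c mu :: "nat \<Rightarrow> real"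
  assumes prob: "prob_space P"
    and M_pos: "1 \<le> M"
    and params: "0 < abar" "abar < 1" "0 \<le> a" "a \<le> abar"
      "\<forall>i<M. \<bar>b i\<bar> \<le> bbar" "\<forall>i<M. \<bar>c i\<bar> \<le> cbar" "\<forall>i<M. - mubar \<le> mu i \<and> mu i \<le> mubar"
    and meas: "\<forall>t. x t \<in> borel_measurable P" "\<forall>t. w t \<in> borel_measurable P"
      "\<forall>t i. (\<lambda>\<omega>. u t \<omega> i) \<in> borel_measurable P" "\<forall>t i. (\<lambda>\<omega>. d t \<omega> i) \<in> borel_measurable P"
    and actions: "\<forall>t. \<forall>\<omega>\<in>space P. u t \<omega> \<in> Uset M"
    and dynamics: "\<forall>t\<ge>1. AE \<omega> in P.
        x (t + 1) \<omega> = a * x t \<omega> + (\<Sum>i<M. b i * u t \<omega> i) + (\<Sum>i<M. c i * d t \<omega> i) + w t \<omega>"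
    and adherence: "\<forall>t\<ge>1. \<forall>i<M. (AE \<omega> in P. d t \<omega> i \<in> {0, 1}) \<and>
        (\<forall>B \<in> sets (borel :: (real \<times> real) measure).
           measure P {\<omega> \<in> space P. d t \<omega> i = 1 \<and> (x t \<omega>, u t \<omega> i) \<in> B}
           = (LINT \<omega>:{\<omega> \<in> space P. (x t \<omega>, u t \<omega> i) \<in> B}|P. u t \<omega> i * sigmoid (x t \<omega> + mu i)))"
    and noise_iid: "prob_space.indep_vars P (\<lambda>_. borel) w UNIV"
      "\<forall>t. distr P borel (w t) = distr P borel (w 0)"
    and noise_sym: "distr P borel (\<lambda>\<omega>. - w 0 \<omega>) = distr P borel (w 0)"
    and noise_bdd: "0 < wbar" "AE \<omega> in P. \<bar>w 0 \<omega>\<bar> \<le> wbar"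
    and noise_subg: "\<forall>l. prob_space.expectation P (\<lambda>\<omega>. exp (l * w 0 \<omega>)) \<le> exp (l\<^sup>2 * sigma_s\<^sup>2 / 2)"
    and noise_lc: "\<exists>f. log_concave f \<and> distributed P lborel (w 0) (\<lambda>z. ennreal (f z))"
    and x1: "distr P borel (x 1) = distr P borel (w 0)"
    and r_range: "0 < r" "r \<le> 1"
    and k_pos: "1 \<le> k"
    and policy: "exploratory P M (patient_filtration P M x u d w) u r k"
    and delta: "0 < \<delta>" "\<delta> < 1"
    and T_large: "real T \<ge> real k + 8 / r * real (M + 1) * ln (real M / \<delta>)"
  shows "measure P {\<omega> \<in> space P. \<forall>i<M.
           real (count_treat u T i \<omega>) > r * (real T - real k) / (2 * real (M + 1))}
         \<ge> 1 - \<delta>"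
proof -
  interpret prob_space P by (rule prob)
  define F where "F = patient_filtration P M x u d w"
  have sub: "subalgebra P (F t)" for t
    unfolding F_def using meas by (intro subalgebra_patient_filtration) auto
  have mono: "sets (F s) \<subseteq> sets (F t)" if "s \<le> t" for s t
    unfolding F_def using that by (rule patient_filtration_mono)
  have action_events: "{\<omega> \<in> space P. u t \<omega> = v} \<in> sets (F t)" if "v \<in> Uset M" for t v
    unfolding F_def using actions that by (intro action_event_in_patient_filtration) auto
  have "0 < 8 / r * real (M + 1) * ln (real M / \<delta>)"
    using M_pos delta r_range by simp
  then have k_le_T: "k \<le> T"
    using T_large by linarith
  let ?c = "r * (real T - real k) / (2 * real (M + 1))"
  have rare: "prob {\<omega> \<in> space P. \<not> ?c < count_treat u T i \<omega>} \<le> \<delta> / M" if i: "i < M" for i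
  proof -
    have "prob {\<omega> \<in> space P. \<not> ?c < count_treat u T i \<omega>}
        \<le> exp (- (r * (real T - real k) / (8 * real (M + 1))))"
      using prob_exploratory_action_rare_le[OF prob policy[folded F_def] sub mono action_events
          basis_vec_in_Uset[OF i] _ k_pos k_le_T] r_range
      by (simp add: count_treat_def not_less)
    also have "\<dots> \<le> exp (- ln (real M / \<delta>))"
      using T_large r_range by (simp add: field_simps)
    also have "\<dots> = \<delta> / M"
      using M_pos delta by (simp add: exp_minus)
    finally show ?thesis .
  qed
  have "{\<omega> \<in> space P. u t \<omega> = basis_vec i} \<in> events" if "i < M" for t i
    using action_events[OF basis_vec_in_Uset[OF that]] sub[of t] by (auto simp: subalgebra_def)
  then have events: "{\<omega> \<in> space P. ?c < count_treat u T i \<omega>} \<in> events" if "i < M" for i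
    using that by (intro borel_measurable_less borel_measurable_const borel_measurable_count_treat)
  have "1 - real M * (\<delta> / M) \<le> prob {\<omega> \<in> space P. \<forall>i<M. ?c < count_treat u T i \<omega>}"
    using events rare by (rule prob_all_lessThan_ge)
  then show ?thesis
    using M_pos by simp
qed
end
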